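(* Let $2\le n<m$ and let $\lambda$ be any real characteristic matrix on the dual cyclic polytope $C^n(m)^*$. Then there exists an (integral) characteristic matrix $\lambda'$ on $C^n(m)^*$ whose reduction modulo $2$ is $\lambda$. Equivalently, every small cover over $C^n(m)^*$ is (equivariantly homeomorphic to) the fixed point set of the conjugation involution of some quasitoric manifold over $C^n(m)^*$.
   Context: $C^n(m)^*$ is the dual of the cyclic polytope $C^n(m)$ (convex hull in $\mathbb{R}^n$ of $(t_i,\ldots,t_i^n)$, $i=1,\ldots,m$, $t_1<\cdots<t_m$); it is a simple $n$-polytope with facets $F_1,\ldots,F_m$. A characteristic matrix on a simple $n$-polytope $P$ with facets $F_1,\ldots,F_m$ is an integer $n\times m$ matrix $(\boldsymbol\lambda_1,\ldots,\boldsymbol\lambda_m)$ such that whenever $F_{i_1},\ldots,F_{i_n}$ meet at a vertex, $\det(\boldsymbol\lambda_{i_1},\ldots,\boldsymbol\lambda_{i_n})=\pm1$; a real characteristic matrix is defined in the same way with entries in $\mathbb{Z}/2$ and determinant $1$ in $\mathbb{Z}/2$. Quasitoric manifolds (resp. small covers) over $P$ correspond to characteristic (resp. real characteristic) matrices, and the fixed point set of the conjugation involution $[t,q]\mapsto[t^{-1},q]$ on the quasitoric manifold of $\lambda'$ is the small cover of the mod $2$ reduction of $\lambda'$. *)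

theory Defs
  imports Main "HOL-Library.Z2" "Jordan_Normal_Form.Determinant"
begin

text \<open>Indices are 0-based: the points of the cyclic polytope are
  v_i = (t i, t i^2, ..., t i^n) for i < m, and facet F_i of the dual
  polytope corresponds to vertex v_i of C^n(m) and to column i of a matrix.\<close>

text \<open>S (a set of n indices) is the vertex set of a facet of C^n(m):
  there is a hyperplane a.x = b containing exactly the points v_i, i in S,
  with all remaining points strictly on one side. Equivalently, the facets
  F_i (i in S) of the dual polytope meet at a vertex.\<close>
definition cyclic_facet :: "nat \<Rightarrow> nat \<Rightarrow> (nat \<Rightarrow> real) \<Rightarrow> nat set \<Rightarrow> bool" where
  "cyclic_facet n m t S \<longleftrightarrow> S \<subseteq> {..<m} \<and> card S = n \<and>
     (\<exists>(a::nat \<Rightarrow> real) b.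
        (\<forall>i\<in>S. (\<Sum>k=1..n. a k * t i ^ k) = b) \<and>
        (\<forall>i\<in>{..<m} - S. (\<Sum>k=1..n. a k * t i ^ k) < b))"

definition col_submat :: "'a mat \<Rightarrow> nat set \<Rightarrow> 'a mat" where
  "col_submat A S = mat (dim_row A) (card S)
      (\<lambda>(i, k). A $$ (i, sorted_list_of_set S ! k))"

definition char_matrix :: "nat \<Rightarrow> nat \<Rightarrow> (nat \<Rightarrow> real) \<Rightarrow> int mat \<Rightarrow> bool" where
  "char_matrix n m t A \<longleftrightarrow> dim_row A = n \<and> dim_col A = m \<and>
     (\<forall>S. cyclic_facet n m t S \<longrightarrow> det (col_submat A S) \<in> {1, -1})"

definition real_char_matrix :: "nat \<Rightarrow> nat \<Rightarrow> (nat \<Rightarrow> real) \<Rightarrow> bit mat \<Rightarrow> bool" where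
  "real_char_matrix n m t A \<longleftrightarrow> dim_row A = n \<and> dim_col A = m \<and>
     (\<forall>S. cyclic_facet n m t S \<longrightarrow> det (col_submat A S) = 1)"

definition mod2_reduction :: "int mat \<Rightarrow> bit mat" where
  "mod2_reduction A = map_mat of_int A"

end

theory Submission
  imports Defs "HOL-Computational_Algebra.Polynomial"
begin

text \<open>By Gale's evenness condition the first \<open>n\<close> vertices of \<open>C\<^sup>n(m)\<close> form a facet, so a real
  characteristic matrix factors as \<open>X * [I\<^sub>n | Q]\<close> with \<open>det X = 1\<close>. If \<open>n \<ge> 4\<close> and
  \<open>m \<ge> n + 4\<close>, the facets made of the first \<open>n - 4\<close> vertices and two pairs of consecutive ones
  impose an unsolvable system on a \<open>4 \<times> 4\<close> block of \<open>Q\<close>, so there is nothing to lift. Otherwise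
  every facet minor of \<open>[I\<^sub>n | Q]\<close> uses at most three columns of \<open>Q\<close>; lifting \<open>Q\<close> entrywise
  to a \<open>0/1\<close> integer matrix makes every facet minor odd and at most \<open>2\<close> in absolute value, hence
  \<open>\<plusminus>1\<close>. Finally \<open>X\<close> lifts to an integer matrix of determinant \<open>\<plusminus>1\<close>: while \<open>|det|\<close> exceeds
  \<open>1\<close>, adding an even multiple of a suitable Bezout combination of cofactors to one column
  decreases it without changing the reduction mod \<open>2\<close>.\<close>

section \<open>Gale's evenness condition\<close>

lemma poly_altdef_le:
  fixes p :: "'a::comm_semiring_1 poly"
  assumes "degree p \<le> n"
  shows "poly p x = (\<Sum>k\<le>n. coeff p k * x ^ k)"
  unfolding poly_altdef
  by (rule sum.mono_neutral_left) (use assms in \<open>auto simp: coeff_eq_0\<close>)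

lemma prod_diff_pos_if_even_above:
  fixes t :: "nat \<Rightarrow> real"
  assumes mono: "strict_mono_on {..<m} t" and S: "S \<subseteq> {..<m}"
    and j: "j < m" "j \<notin> S" and even: "even (card {i\<in>S. j < i})"
  shows "(\<Prod>i\<in>S. t j - t i) > 0"
proof -
  define A where "A = {i\<in>S. i < j}"
  define B where "B = {i\<in>S. j < i}"
  have fin: "finite A" "finite B"
    using finite_subset[OF S] unfolding A_def B_def by auto
  have split: "S = A \<union> B" "A \<inter> B = {}"
    unfolding A_def B_def using j by (auto, metis linorder_neqE_nat)
  have below: "(\<Prod>i\<in>A. t j - t i) > 0"
    using S j mono by (intro prod_pos) (auto simp: A_def strict_mono_on_def)
  have "(\<Prod>i\<in>B. t j - t i) = (-1) ^ card B * (\<Prod>i\<in>B. t i - t j)"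
    by (simp flip: prod_constant prod.distrib)
  moreover have "(\<Prod>i\<in>B. t i - t j) > 0"
    using S j mono by (intro prod_pos) (auto simp: B_def strict_mono_on_def)
  ultimately have above: "(\<Prod>i\<in>B. t j - t i) > 0"
    using even by (simp add: B_def)
  show ?thesis
    using below above by (simp add: split prod.union_disjoint[OF fin])
qed

text \<open>The hyperplane through the points indexed by \<open>S\<close> is read off
  the polynomial \<open>\<Prod>i\<in>S. (x - t i)\<close>, which vanishes on \<open>S\<close> and is positive at every
  other point exactly when each gap of \<open>S\<close> is followed by an even number of elements of \<open>S\<close>.\<close>
lemma cyclic_facet_if_gale_even:
  assumes mono: "strict_mono_on {..<m} t" and S: "S \<subseteq> {..<m}" "card S = n"
    and even: "\<And>j. j \<in> {..<m} - S \<Longrightarrow> even (card {i\<in>S. j < i})"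
  shows "cyclic_facet n m t S"
proof -
  have fin: "finite S" using S finite_subset by blast
  define p where "p = (\<Prod>i\<in>S. [:- t i, 1:])"
  have "degree p \<le> (\<Sum>i\<in>S. degree [:- t i, 1:])"
    unfolding p_def using degree_prod_sum_le[OF fin, of "\<lambda>i. [:- t i, 1:]"] by (simp add: o_def)
  then have deg: "degree p \<le> n" using S by simp
  have poly_p: "poly p x = (\<Prod>i\<in>S. x - t i)" for x
    unfolding p_def poly_prod by simp
  define a where "a k = - coeff p k" for k
  define b where "b = coeff p 0"
  have hyperplane: "(\<Sum>k=1..n. a k * x ^ k) = b - poly p x" for x
  proof -
    have "{..n} = insert 0 {1..n}" by auto
    then show ?thesis
      unfolding poly_altdef_le[OF deg] a_def b_def by (simp add: sum_negf)
  qed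
  have on_S: "poly p (t i) = 0" if "i \<in> S" for i
    unfolding poly_p using that fin by (auto intro: prod_zero)
  have off_S: "poly p (t j) > 0" if "j \<in> {..<m} - S" for j
    unfolding poly_p using that by (intro prod_diff_pos_if_even_above[OF mono S(1)] even) auto
  show ?thesis
    unfolding cyclic_facet_def
  proof (intro conjI exI[of _ a] exI[of _ b] ballI)
    show "(\<Sum>k = 1..n. a k * t i ^ k) = b" if "i \<in> S" for i
      using on_S[OF that] hyperplane[of "t i"] by simp
    show "(\<Sum>k = 1..n. a k * t j ^ k) < b" if "j \<in> {..<m} - S" for j
      using off_S[OF that] hyperplane[of "t j"] by simp
  qed (use S in auto)
qed

lemma cyclic_facet_initial:
  assumes "strict_mono_on {..<m} t" and "n \<le> m"
  shows "cyclic_facet n m t {..<n}"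
proof (rule cyclic_facet_if_gale_even[OF assms(1)])
  fix j assume "j \<in> {..<m} - {..<n}"
  then have "{i \<in> {..<n}. j < i} = {}" by auto
  then show "even (card {i \<in> {..<n}. j < i})" by (simp only: card.empty even_zero)
qed (use assms in auto)

lemma cyclic_facet_initial_two_pairs:
  assumes mono: "strict_mono_on {..<m} t" and pa: "p \<le> a" and ab: "Suc a < b" and bm: "Suc b < m"
  shows "cyclic_facet (p + 4) m t ({..<p} \<union> {a, Suc a, b, Suc b})"
proof (rule cyclic_facet_if_gale_even[OF mono])
  show "{..<p} \<union> {a, Suc a, b, Suc b} \<subseteq> {..<m}"
    using pa ab bm by auto
  show "card ({..<p} \<union> {a, Suc a, b, Suc b}) = p + 4"
    using pa ab by (subst card_Un_disjoint) auto
next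
  fix j assume "j \<in> {..<m} - ({..<p} \<union> {a, Suc a, b, Suc b})"
  then have j: "p \<le> j" "j \<noteq> a" "j \<noteq> Suc a" "j \<noteq> b" "j \<noteq> Suc b" by auto
  have restrict: "{i \<in> {..<p} \<union> {a, Suc a, b, Suc b}. j < i} = {i \<in> {a, Suc a, b, Suc b}. j < i}"
    using j(1) by auto
  consider "j < a" | "Suc a < j" "j < b" | "Suc b < j"
    using j by linarith
  then show "even (card {i \<in> {..<p} \<union> {a, Suc a, b, Suc b}. j < i})"
  proof cases
    case 1
    then have "{i \<in> {a, Suc a, b, Suc b}. j < i} = {a, Suc a, b, Suc b}" using ab by auto
    then show ?thesis unfolding restrict using ab by simp
  next
    case 2
    then have "{i \<in> {a, Suc a, b, Suc b}. j < i} = {b, Suc b}" using ab by auto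
    then show ?thesis unfolding restrict by simp
  next
    case 3
    then have "{i \<in> {a, Suc a, b, Suc b}. j < i} = {}" using ab by auto
    then show ?thesis unfolding restrict by (simp only: card.empty even_zero)
  qed
qed

lemma sorted_list_of_set_nth_mem:
  assumes "finite S" "k < card S"
  shows "sorted_list_of_set S ! k \<in> S"
  using assms by (metis length_sorted_list_of_set nth_mem set_sorted_list_of_set)

lemma col_submat_carrier: "col_submat A S \<in> carrier_mat (dim_row A) (card S)"
  unfolding col_submat_def by simp

lemma index_col_submat:
  "i < dim_row A \<Longrightarrow> k < card S \<Longrightarrow> col_submat A S $$ (i, k) = A $$ (i, sorted_list_of_set S ! k)"
  unfolding col_submat_def by simp

lemma col_submat_mult:
  assumes A: "A \<in> carrier_mat l n" and B: "B \<in> carrier_mat n m" and S: "S \<subseteq> {..<m}"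
  shows "col_submat (A * B) S = A * col_submat B S"
proof (rule eq_matI)
  fix i k assume i: "i < dim_row (A * col_submat B S)" and k: "k < dim_col (A * col_submat B S)"
  have k': "k < card S" using k by (simp add: col_submat_def)
  have "sorted_list_of_set S ! k < m"
    using sorted_list_of_set_nth_mem[OF finite_subset[OF S] k'] S by auto
  then show "col_submat (A * B) S $$ (i, k) = (A * col_submat B S) $$ (i, k)"
    using i k' A B unfolding col_submat_def by (simp add: scalar_prod_def)
qed (use A B in \<open>auto simp: col_submat_def\<close>)

lemma col_submat_map:
  assumes S: "S \<subseteq> {..<dim_col A}"
  shows "col_submat (map_mat f A) S = map_mat f (col_submat A S)"
proof (rule eq_matI)
  fix i k assume i: "i < dim_row (map_mat f (col_submat A S))" and k: "k < dim_col (map_mat f (col_submat A S))"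
  have k': "k < card S" using k by (simp add: col_submat_def)
  have "sorted_list_of_set S ! k < dim_col A"
    using sorted_list_of_set_nth_mem[OF finite_subset[OF S] k'] S by auto
  then show "col_submat (map_mat f A) S $$ (i, k) = map_mat f (col_submat A S) $$ (i, k)"
    using i k' unfolding col_submat_def by simp
qed (auto simp: col_submat_def)

lemma index_col_submat_initial:
  "i < dim_row A \<Longrightarrow> k < n \<Longrightarrow> col_submat A {..<n} $$ (i,k) = A $$ (i,k)"
  unfolding col_submat_def by (simp add: lessThan_atLeast0)

lemma sorted_list_of_set_initial_two_pairs:
  assumes "p \<le> a" and "Suc a < b"
  shows "sorted_list_of_set ({..<p} \<union> {a, Suc a, b, Suc b}) = [0..<p] @ [a, Suc a, b, Suc b]"
proof -
  have "sorted_list_of_set (set ([0..<p] @ [a, Suc a, b, Suc b])) = [0..<p] @ [a, Suc a, b, Suc b]"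
    by (rule sorted_list_of_set_sort_remdups[THEN trans])
      (use assms in \<open>auto simp: sorted_wrt_append distinct_remdups_id intro!: sorted_sort_id\<close>)
  moreover have "set ([0..<p] @ [a, Suc a, b, Suc b]) = {..<p} \<union> {a, Suc a, b, Suc b}" by auto
  ultimately show ?thesis by metis
qed

text \<open>The first \<open>p\<close> columns of the minor are unit vectors, so it reduces to its lower right
  \<open>4 \<times> 4\<close> block.\<close>
lemma det_col_submat_initial_two_pairs:
  fixes N :: "'a::idom mat"
  assumes N: "N \<in> carrier_mat (p + 4) m"
    and unit: "\<forall>i<p + 4. \<forall>k<p + 4. N $$ (i,k) = (if i = k then 1 else 0)"
    and pa: "p \<le> a" and ab: "Suc a < b" and bm: "Suc b < m"
  shows "det (col_submat N ({..<p} \<union> {a, Suc a, b, Suc b})) =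
         det (mat 4 4 (\<lambda>(r,c). N $$ (p + r, [a, Suc a, b, Suc b] ! c)))"
proof -
  define l where "l = [a, Suc a, b, Suc b]"
  define S where "S = {..<p} \<union> {a, Suc a, b, Suc b}"
  have sorted: "sorted_list_of_set S = [0..<p] @ l"
    unfolding S_def l_def by (rule sorted_list_of_set_initial_two_pairs[OF pa ab])
  have card: "card S = p + 4" unfolding S_def using pa ab by (subst card_Un_disjoint) auto
  define B where "B = mat p 4 (\<lambda>(r,c). N $$ (r, l ! c))"
  define C where "C = mat 4 4 (\<lambda>(r,c). N $$ (p + r, l ! c))"
  have blocks: "col_submat N S = four_block_mat (1\<^sub>m p) B (0\<^sub>m 4 p) C"
  proof (rule eq_matI)
    fix i k assume i: "i < dim_row (four_block_mat (1\<^sub>m p) B (0\<^sub>m 4 p) C)"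
      and k: "k < dim_col (four_block_mat (1\<^sub>m p) B (0\<^sub>m 4 p) C)"
    have i': "i < p + 4" and k': "k < p + 4" using i k unfolding B_def C_def by auto
    have "([0..<p] @ l) ! k = (if k < p then k else l ! (k - p))"
      by (simp add: nth_append)
    moreover have "l ! (k - p) < m" using k' ab bm unfolding l_def
      by (cases "k - p") (auto simp: less_Suc_eq numeral_eq_Suc)
    ultimately show "col_submat N S $$ (i, k) = four_block_mat (1\<^sub>m p) B (0\<^sub>m 4 p) C $$ (i, k)"
      unfolding col_submat_def sorted using i' k' N unit by (auto simp: B_def C_def card)
  qed (use N card in \<open>auto simp: col_submat_def B_def C_def\<close>)
  have "det (col_submat N S) = det (1\<^sub>m p) * det C"
    unfolding blocks by (rule det_four_block_mat_lower_left_zero) (auto simp: B_def C_def)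
  then show ?thesis unfolding S_def C_def l_def by simp
qed

lemma index_mat_delete:
  "i' < dim_row A - 1 \<Longrightarrow> j' < dim_col A - 1 \<Longrightarrow>
   mat_delete A i j $$ (i',j') = A $$ (insert_index i i', insert_index j j')"
  unfolding mat_delete_def insert_index_def by simp

lemma det_2:
  fixes A :: "'a::comm_ring_1 mat"
  assumes A: "A \<in> carrier_mat 2 2"
  shows "det A = A $$ (0,0) * A $$ (1,1) - A $$ (0,1) * A $$ (1,0)"
proof -
  have minor: "det (mat_delete A i 0) = mat_delete A i 0 $$ (0,0)" for i
    by (rule det_single) (use A in \<open>auto intro!: mat_delete_carrier\<close>)
  have "det A = (\<Sum>i<2. A $$ (i,0) * cofactor A i 0)"
    by (rule laplace_expansion_column[OF A]) simp
  also have "\<dots> = A $$ (0,0) * A $$ (1,1) - A $$ (0,1) * A $$ (1,0)"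
    using A by (simp add: numeral_2_eq_2 cofactor_def minor index_mat_delete insert_index_def)
  finally show ?thesis .
qed

lemma det_3:
  fixes A :: "'a::comm_ring_1 mat"
  assumes A: "A \<in> carrier_mat 3 3"
  shows "det A = A $$ (0,0) * (A $$ (1,1) * A $$ (2,2) - A $$ (1,2) * A $$ (2,1))
               - A $$ (1,0) * (A $$ (0,1) * A $$ (2,2) - A $$ (0,2) * A $$ (2,1))
               + A $$ (2,0) * (A $$ (0,1) * A $$ (1,2) - A $$ (0,2) * A $$ (1,1))"
proof -
  have minor: "mat_delete A i 0 \<in> carrier_mat 2 2" for i
    using mat_delete_carrier[OF A] by simp
  have "det A = (\<Sum>i<3. A $$ (i,0) * cofactor A i 0)"
    by (rule laplace_expansion_column[OF A]) simp
  also have "\<dots> = A $$ (0,0) * (A $$ (1,1) * A $$ (2,2) - A $$ (1,2) * A $$ (2,1))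
               - A $$ (1,0) * (A $$ (0,1) * A $$ (2,2) - A $$ (0,2) * A $$ (2,1))
               + A $$ (2,0) * (A $$ (0,1) * A $$ (1,2) - A $$ (0,2) * A $$ (1,1))"
    using A by (simp add: numeral_3_eq_3 numeral_2_eq_2 cofactor_def det_2[OF minor]
        index_mat_delete insert_index_def algebra_simps)
  finally show ?thesis .
qed

lemma abs_det_01_le_2_if_dim_le_3:
  fixes M :: "int mat"
  assumes M: "M \<in> carrier_mat n n" and n: "n \<le> 3"
    and entries: "\<forall>i<n. \<forall>j<n. M $$ (i,j) \<in> {0,1}"
  shows "\<bar>det M\<bar> \<le> 2"
proof -
  consider "n = 0" | "n = 1" | "n = 2" | "n = 3" using n by linarith
  then show ?thesis
  proof cases
    case 1
    then show ?thesis using M by simp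
  next
    case 2
    then show ?thesis using M entries det_single[of M] by fastforce
  next
    case 3
    then have "M $$ (0,0) \<in> {0,1}" "M $$ (0,1) \<in> {0,1}" "M $$ (1,0) \<in> {0,1}" "M $$ (1,1) \<in> {0,1}"
      using entries by auto
    then show ?thesis unfolding det_2[OF M[unfolded 3]] by auto
  next
    case 4
    then have "M $$ (0,0) \<in> {0,1}" "M $$ (0,1) \<in> {0,1}" "M $$ (0,2) \<in> {0,1}"
      "M $$ (1,0) \<in> {0,1}" "M $$ (1,1) \<in> {0,1}" "M $$ (1,2) \<in> {0,1}"
      "M $$ (2,0) \<in> {0,1}" "M $$ (2,1) \<in> {0,1}" "M $$ (2,2) \<in> {0,1}"
      using entries by auto
    then show ?thesis unfolding det_3[OF M[unfolded 4]] by auto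
  qed
qed

definition sparse_col :: "'a::zero mat \<Rightarrow> nat \<Rightarrow> nat \<Rightarrow> bool" where
  "sparse_col M n j \<longleftrightarrow> (\<forall>i<n. \<forall>i'<n. M $$ (i,j) \<noteq> 0 \<longrightarrow> M $$ (i',j) \<noteq> 0 \<longrightarrow> i = i')"

lemma abs_det_mat_delete_unit_col:
  fixes M :: "int mat"
  assumes M: "M \<in> carrier_mat n n" and r: "r < n" and j: "j < n"
    and one: "M $$ (r,j) = 1" and zero: "\<And>i. i < n \<Longrightarrow> i \<noteq> r \<Longrightarrow> M $$ (i,j) = 0"
  shows "\<bar>det M\<bar> = \<bar>det (mat_delete M r j)\<bar>"
proof -
  have "det M = (\<Sum>i<n. M $$ (i,j) * cofactor M i j)"
    by (rule laplace_expansion_column[OF M j])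
  also have "\<dots> = M $$ (r,j) * cofactor M r j"
    by (rule sum.remove[where x = r, THEN trans]) (use r zero in auto)
  finally show ?thesis
    using one unfolding cofactor_def by (simp add: abs_mult)
qed

lemma card_dense_cols_mat_delete_le:
  assumes M: "M \<in> carrier_mat (Suc n) (Suc n)" and r: "r < Suc n" and j: "j < Suc n"
  shows "card {b. b < n \<and> \<not> sparse_col (mat_delete M r j) n b}
    \<le> card {k. k < Suc n \<and> \<not> sparse_col M (Suc n) k}"
proof (rule card_inj_on_le)
  show "inj_on (insert_index j) {b. b < n \<and> \<not> sparse_col (mat_delete M r j) n b}"
    using insert_index_inj_on by blast
  show "insert_index j ` {b. b < n \<and> \<not> sparse_col (mat_delete M r j) n b}
    \<subseteq> {k. k < Suc n \<and> \<not> sparse_col M (Suc n) k}"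
  proof clarify
    fix b assume b: "b < n" and dense: "\<not> sparse_col (mat_delete M r j) n b"
    then obtain a1 a2 where a: "a1 < n" "a2 < n" "a1 \<noteq> a2"
      and nz: "mat_delete M r j $$ (a1,b) \<noteq> 0" "mat_delete M r j $$ (a2,b) \<noteq> 0"
      unfolding sparse_col_def by blast
    have "M $$ (insert_index r a1, insert_index j b) \<noteq> 0" "M $$ (insert_index r a2, insert_index j b) \<noteq> 0"
      using nz mat_delete_index[OF M r j] a b by auto
    moreover have "insert_index r a1 \<noteq> insert_index r a2" "insert_index r a1 < Suc n" "insert_index r a2 < Suc n"
      using a by (auto simp: insert_index_def)
    moreover have "insert_index j b < Suc n"
      using b by (simp add: insert_index_def)
    ultimately show "insert_index j b < Suc n \<and> \<not> sparse_col M (Suc n) (insert_index j b)"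
      unfolding sparse_col_def by blast
  qed
qed simp

text \<open>Expanding along sparse columns reduces to at most three columns, whose \<open>0/1\<close> determinant
  is at most \<open>2\<close>.\<close>
lemma abs_det_01_le_2:
  fixes M :: "int mat"
  assumes "M \<in> carrier_mat n n" and "\<forall>i<n. \<forall>j<n. M $$ (i,j) \<in> {0,1}"
    and "card {j. j < n \<and> \<not> sparse_col M n j} \<le> 3"
  shows "\<bar>det M\<bar> \<le> 2"
  using assms
proof (induction n arbitrary: M)
  case 0
  then show ?case by simp
next
  case (Suc n)
  note M = Suc.prems(1) and entries = Suc.prems(2) and dense = Suc.prems(3)
  show ?case
  proof (cases "\<exists>j<Suc n. sparse_col M (Suc n) j")
    case False
    then have "{j. j < Suc n \<and> \<not> sparse_col M (Suc n) j} = {..<Suc n}" by auto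
    then show ?thesis using dense abs_det_01_le_2_if_dim_le_3[OF M _ entries] by simp
  next
    case True
    then obtain j where j: "j < Suc n" and sparse: "sparse_col M (Suc n) j" by blast
    show ?thesis
    proof (cases "\<forall>i<Suc n. M $$ (i,j) = 0")
      case True
      then show ?thesis unfolding laplace_expansion_column[OF M j] by simp
    next
      case False
      then obtain r where r: "r < Suc n" and "M $$ (r,j) \<noteq> 0" by blast
      then have one: "M $$ (r,j) = 1" and zero: "\<And>i. i < Suc n \<Longrightarrow> i \<noteq> r \<Longrightarrow> M $$ (i,j) = 0"
        using entries sparse j unfolding sparse_col_def by auto
      define D where "D = mat_delete M r j"
      have D: "D \<in> carrier_mat n n" unfolding D_def using mat_delete_carrier[OF M] by simp
      have "\<forall>a<n. \<forall>b<n. D $$ (a,b) \<in> {0,1}"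
        using entries mat_delete_index[OF M r j] unfolding D_def
        by (metis insert_index_def Suc_mono less_SucI)
      moreover have "card {b. b < n \<and> \<not> sparse_col D n b} \<le> 3"
        using card_dense_cols_mat_delete_le[OF M r j] dense unfolding D_def by linarith
      ultimately have "\<bar>det D\<bar> \<le> 2" using Suc.IH D by blast
      then show ?thesis
        using abs_det_mat_delete_unit_col[OF M r j one zero] unfolding D_def by simp
    qed
  qed
qed

section \<open>No small covers when \<open>n \<ge> 4\<close> and \<open>m \<ge> n + 4\<close>\<close>

lemma det_4:
  fixes A :: "'a::comm_ring_1 mat"
  assumes A: "A \<in> carrier_mat 4 4"
  shows "det A = A $$ (0,0) * (A $$ (1,1) * (A $$ (2,2) * A $$ (3,3) - A $$ (2,3) * A $$ (3,2)) - A $$ (2,1) * (A $$ (1,2) * A $$ (3,3) - A $$ (1,3) * A $$ (3,2)) + A $$ (3,1) * (A $$ (1,2) * A $$ (2,3) - A $$ (1,3) * A $$ (2,2)))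
   - A $$ (1,0) * (A $$ (0,1) * (A $$ (2,2) * A $$ (3,3) - A $$ (2,3) * A $$ (3,2)) - A $$ (2,1) * (A $$ (0,2) * A $$ (3,3) - A $$ (0,3) * A $$ (3,2)) + A $$ (3,1) * (A $$ (0,2) * A $$ (2,3) - A $$ (0,3) * A $$ (2,2)))
   + A $$ (2,0) * (A $$ (0,1) * (A $$ (1,2) * A $$ (3,3) - A $$ (1,3) * A $$ (3,2)) - A $$ (1,1) * (A $$ (0,2) * A $$ (3,3) - A $$ (0,3) * A $$ (3,2)) + A $$ (3,1) * (A $$ (0,2) * A $$ (1,3) - A $$ (0,3) * A $$ (1,2)))
   - A $$ (3,0) * (A $$ (0,1) * (A $$ (1,2) * A $$ (2,3) - A $$ (1,3) * A $$ (2,2)) - A $$ (1,1) * (A $$ (0,2) * A $$ (2,3) - A $$ (0,3) * A $$ (2,2)) + A $$ (2,1) * (A $$ (0,2) * A $$ (1,3) - A $$ (0,3) * A $$ (1,2)))"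
proof -
  have minor: "mat_delete A i 0 \<in> carrier_mat 3 3" for i
    using mat_delete_carrier[OF A] by simp
  have "det A = (\<Sum>i<4. A $$ (i,0) * cofactor A i 0)"
    by (rule laplace_expansion_column[OF A]) simp
  also have "\<dots> = A $$ (0,0) * (A $$ (1,1) * (A $$ (2,2) * A $$ (3,3) - A $$ (2,3) * A $$ (3,2)) - A $$ (2,1) * (A $$ (1,2) * A $$ (3,3) - A $$ (1,3) * A $$ (3,2)) + A $$ (3,1) * (A $$ (1,2) * A $$ (2,3) - A $$ (1,3) * A $$ (2,2)))
   - A $$ (1,0) * (A $$ (0,1) * (A $$ (2,2) * A $$ (3,3) - A $$ (2,3) * A $$ (3,2)) - A $$ (2,1) * (A $$ (0,2) * A $$ (3,3) - A $$ (0,3) * A $$ (3,2)) + A $$ (3,1) * (A $$ (0,2) * A $$ (2,3) - A $$ (0,3) * A $$ (2,2)))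
   + A $$ (2,0) * (A $$ (0,1) * (A $$ (1,2) * A $$ (3,3) - A $$ (1,3) * A $$ (3,2)) - A $$ (1,1) * (A $$ (0,2) * A $$ (3,3) - A $$ (0,3) * A $$ (3,2)) + A $$ (3,1) * (A $$ (0,2) * A $$ (1,3) - A $$ (0,3) * A $$ (1,2)))
   - A $$ (3,0) * (A $$ (0,1) * (A $$ (1,2) * A $$ (2,3) - A $$ (1,3) * A $$ (2,2)) - A $$ (1,1) * (A $$ (0,2) * A $$ (2,3) - A $$ (0,3) * A $$ (2,2)) + A $$ (2,1) * (A $$ (0,2) * A $$ (1,3) - A $$ (0,3) * A $$ (1,2)))"
    using A by (simp add: numeral_3_eq_3 numeral_2_eq_2 eval_nat_numeral cofactor_def det_3[OF minor] index_mat_delete insert_index_def algebra_simps)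
  finally show ?thesis .
qed

text \<open>The \<open>c\<close>-th column of \<open>unit_ext_minor q T\<close> is column \<open>T ! c\<close> of the \<open>4 \<times> 8\<close> matrix
  \<open>[I\<^sub>4 | q]\<close>.\<close>
definition unit_ext_minor :: "(nat \<Rightarrow> nat \<Rightarrow> bit) \<Rightarrow> nat list \<Rightarrow> bit mat" where
  "unit_ext_minor q T =
     mat 4 4 (\<lambda>(r,c). if T ! c < 4 then (if r = T ! c then 1 else 0) else q r (T ! c - 4))"

text \<open>The fourteen facets of \<open>C\<^sup>4(8)\<close> made of two pairs of consecutive vertices already admit no
  real characteristic matrix of the form \<open>[I\<^sub>4 | q]\<close>: a finite check over the sixteen entries of \<open>q\<close>.\<close>
lemma no_real_char_matrix_C4_8:
  fixes q :: "nat \<Rightarrow> nat \<Rightarrow> bit"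
  assumes "\<And>a b. a + 2 \<le> b \<Longrightarrow> b \<le> 6 \<Longrightarrow> det (unit_ext_minor q [a, a+1, b, b+1]) = 1"
  shows False
  using assms[of 0 3] assms[of 0 4] assms[of 0 5] assms[of 0 6] assms[of 1 3] assms[of 1 4]
    assms[of 1 5] assms[of 1 6] assms[of 2 4] assms[of 2 5] assms[of 2 6] assms[of 3 5]
    assms[of 3 6] assms[of 4 6]
  apply (simp add: det_4 unit_ext_minor_def)
  by (cases "q 2 0"; simp?; cases "q 3 0"; simp?; cases "q 0 0"; simp?; cases "q 1 0"; simp?;
      cases "q 2 1"; simp?; cases "q 3 1"; simp?; cases "q 0 1"; simp?; cases "q 1 1"; simp?;
      cases "q 2 2"; simp?; cases "q 3 2"; simp?; cases "q 0 2"; simp?; cases "q 1 2"; simp?;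
      cases "q 2 3"; simp?; cases "q 3 3"; simp?; cases "q 0 3"; simp?; cases "q 1 3"; simp?)

lemma no_normal_real_char_matrix_if_large:
  fixes N :: "bit mat"
  assumes mono: "strict_mono_on {..<m} t" and n: "4 \<le> n" and m: "n + 4 \<le> m"
    and N: "N \<in> carrier_mat n m" and unit: "\<forall>i<n. \<forall>k<n. N $$ (i,k) = (if i = k then 1 else 0)"
    and facets: "\<forall>S. cyclic_facet n m t S \<longrightarrow> det (col_submat N S) = 1"
  shows False
proof (rule no_real_char_matrix_C4_8)
  define p where "p = n - 4"
  have np: "n = p + 4" using n unfolding p_def by simp
  fix a b :: nat assume ab: "a + 2 \<le> b" and b6: "b \<le> 6"
  have pa: "p \<le> p + a" and ab': "Suc (p + a) < p + b" and bm: "Suc (p + b) < m"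
    using ab b6 m np by auto
  have "det (col_submat N ({..<p} \<union> {p + a, Suc (p + a), p + b, Suc (p + b)})) = 1"
    using facets cyclic_facet_initial_two_pairs[OF mono pa ab' bm] np by blast
  moreover have "det (col_submat N ({..<p} \<union> {p + a, Suc (p + a), p + b, Suc (p + b)})) =
      det (mat 4 4 (\<lambda>(r,c). N $$ (p + r, [p + a, Suc (p + a), p + b, Suc (p + b)] ! c)))"
    using det_col_submat_initial_two_pairs[OF _ _ pa ab' bm] N unit np by simp
  moreover have "mat 4 4 (\<lambda>(r,c). N $$ (p + r, [p + a, Suc (p + a), p + b, Suc (p + b)] ! c)) =
      unit_ext_minor (\<lambda>r c. N $$ (p + r, n + c)) [a, a+1, b, b+1]"
  proof (rule eq_matI)
    fix r c assume "r < dim_row (unit_ext_minor (\<lambda>r c. N $$ (p + r, n + c)) [a, a+1, b, b+1])"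
      and "c < dim_col (unit_ext_minor (\<lambda>r c. N $$ (p + r, n + c)) [a, a+1, b, b+1])"
    then have r: "r < 4" and c: "c < 4" unfolding unit_ext_minor_def by auto
    define x where "x = [a, a+1, b, b+1] ! c"
    have "[p + a, Suc (p + a), p + b, Suc (p + b)] ! c = p + x"
      unfolding x_def using c by (cases c) (auto simp: less_Suc_eq numeral_eq_Suc)
    moreover have "N $$ (p + r, p + x) = (if x < 4 then (if r = x then 1 else 0) else N $$ (p + r, n + (x - 4)))"
      using unit r np by (cases "x < 4") (auto simp: add.commute)
    ultimately show "mat 4 4 (\<lambda>(r,c). N $$ (p + r, [p + a, Suc (p + a), p + b, Suc (p + b)] ! c)) $$ (r, c) =
        unit_ext_minor (\<lambda>r c. N $$ (p + r, n + c)) [a, a+1, b, b+1] $$ (r, c)"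
      using r c unfolding unit_ext_minor_def x_def by simp
  qed (auto simp: unit_ext_minor_def)
  ultimately show "det (unit_ext_minor (\<lambda>r c. N $$ (p + r, n + c)) [a, a+1, b, b+1]) = 1" by simp
qed

section \<open>Lifting matrices of odd determinant to unimodular ones\<close>

lemma bezout_combination_dvd_all:
  fixes c :: "nat \<Rightarrow> int"
  shows "\<exists>v. \<forall>i<n. (\<Sum>k<n. v k * c k) dvd c i"
proof (induction n)
  case 0
  then show ?case by simp
next
  case (Suc n)
  then obtain v where v: "\<forall>i<n. (\<Sum>k<n. v k * c k) dvd c i" by blast
  define s where "s = (\<Sum>k<n. v k * c k)"
  obtain a b where ab: "a * s + b * c n = gcd s (c n)" using bezout_int by blast
  define v' where "v' k = (if k < n then a * v k else b)" for k
  have "(\<Sum>k<Suc n. v' k * c k) = (\<Sum>k<n. v' k * c k) + b * c n"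
    by (simp add: v'_def)
  also have "(\<Sum>k<n. v' k * c k) = a * s"
    unfolding s_def v'_def by (simp add: sum_distrib_left mult.assoc)
  finally have combination: "(\<Sum>k<Suc n. v' k * c k) = gcd s (c n)"
    using ab by simp
  have "gcd s (c n) dvd c i" if "i < Suc n" for i
  proof (cases "i < n")
    case True
    then have "s dvd c i" using v unfolding s_def by blast
    then show ?thesis by (meson dvd_trans gcd_dvd1)
  next
    case False
    then show ?thesis using that by (simp add: less_Suc_eq)
  qed
  then show ?case
    unfolding combination[symmetric] by blast
qed

lemma abs_det_eq_1_if_dvd_cofactors:
  fixes Y :: "int mat"
  assumes Y: "Y \<in> carrier_mat n n" and dvd: "\<forall>i<n. \<forall>j<n. det Y dvd cofactor Y i j"
    and nz: "det Y \<noteq> 0"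
  shows "\<bar>det Y\<bar> = 1"
proof -
  define C where "C = mat n n (\<lambda>(i,j). adj_mat Y $$ (i,j) div det Y)"
  have C: "C \<in> carrier_mat n n" unfolding C_def by auto
  have adj: "adj_mat Y = det Y \<cdot>\<^sub>m C"
    using Y dvd unfolding C_def adj_mat_def by (intro eq_matI) auto
  have "det Y \<cdot>\<^sub>m (Y * C) = det Y \<cdot>\<^sub>m 1\<^sub>m n"
    using adj_mat(2)[OF Y] unfolding adj mult_smult_distrib[OF Y C] .
  then have "Y * C = 1\<^sub>m n"
  proof -
    assume scaled: "det Y \<cdot>\<^sub>m (Y * C) = det Y \<cdot>\<^sub>m 1\<^sub>m n"
    show ?thesis
    proof (rule eq_matI)
      fix i j assume ij: "i < dim_row (1\<^sub>m n)" "j < dim_col (1\<^sub>m n)"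
      have "(det Y \<cdot>\<^sub>m (Y * C)) $$ (i,j) = (det Y \<cdot>\<^sub>m 1\<^sub>m n) $$ (i,j)" using scaled by simp
      then show "(Y * C) $$ (i,j) = 1\<^sub>m n $$ (i,j)" using ij Y C nz by simp
    qed (use Y C in auto)
  qed
  then have "det Y * det C = 1"
    using det_mult[OF Y C] by simp
  then show ?thesis
    using zmult_eq_1_iff by fastforce
qed

text \<open>The cofactors in some column admit an integer combination that divides \<open>det Y\<close> and is
  strictly smaller in absolute value; otherwise \<open>det Y\<close> would divide all cofactors.\<close>
lemma smaller_cofactor_combination:
  fixes Y :: "int mat"
  assumes Y: "Y \<in> carrier_mat n n" and nz: "det Y \<noteq> 0" and not_unit: "\<bar>det Y\<bar> \<noteq> 1"
  obtains j v where "j < n" "(\<Sum>k<n. v k * cofactor Y k j) dvd det Y"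
    "\<bar>\<Sum>k<n. v k * cofactor Y k j\<bar> < \<bar>det Y\<bar>"
proof -
  have "\<exists>j<n. \<exists>v. (\<Sum>k<n. v k * cofactor Y k j) dvd det Y \<and> \<bar>\<Sum>k<n. v k * cofactor Y k j\<bar> < \<bar>det Y\<bar>"
  proof (rule ccontr)
    assume no_smaller: "\<not> ?thesis"
    have "det Y dvd cofactor Y i j" if i: "i < n" and j: "j < n" for i j
    proof -
      obtain v where v: "\<forall>i<n. (\<Sum>k<n. v k * cofactor Y k j) dvd cofactor Y i j"
        using bezout_combination_dvd_all[of n "\<lambda>k. cofactor Y k j"] by blast
      define g where "g = (\<Sum>k<n. v k * cofactor Y k j)"
      have g_dvd: "g dvd det Y"
        unfolding laplace_expansion_column[OF Y j] using v unfolding g_def by (intro dvd_sum) auto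
      moreover have "\<not> \<bar>g\<bar> < \<bar>det Y\<bar>"
        using no_smaller j g_dvd unfolding g_def by blast
      moreover have "\<bar>g\<bar> \<le> \<bar>det Y\<bar>"
        using g_dvd nz by (simp add: dvd_imp_le_int)
      ultimately have "\<bar>g\<bar> = \<bar>det Y\<bar>" by simp
      then have "det Y dvd g" by (metis abs_dvd_iff dvd_refl)
      then show ?thesis using v i unfolding g_def by (meson dvd_trans)
    qed
    then show False
      using abs_det_eq_1_if_dvd_cofactors[OF Y _ nz] not_unit by blast
  qed
  then obtain j v where "j < n" "(\<Sum>k<n. v k * cofactor Y k j) dvd det Y"
    "\<bar>\<Sum>k<n. v k * cofactor Y k j\<bar> < \<bar>det Y\<bar>" by blast
  then show ?thesis by (rule that)
qed

definition replace_col :: "'a mat \<Rightarrow> nat \<Rightarrow> (nat \<Rightarrow> 'a) \<Rightarrow> 'a mat" where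
  "replace_col Y j w = mat (dim_row Y) (dim_col Y) (\<lambda>(i,k). if k = j then w i else Y $$ (i,k))"

lemma replace_col_carrier: "Y \<in> carrier_mat n n \<Longrightarrow> replace_col Y j w \<in> carrier_mat n n"
  unfolding replace_col_def by auto

lemma mat_delete_replace_col:
  assumes "Y \<in> carrier_mat n n" "j < n"
  shows "mat_delete (replace_col Y j w) i j = mat_delete Y i j"
  using assms unfolding mat_delete_def replace_col_def by (intro eq_matI) auto

lemma det_replace_col:
  fixes Y :: "'a::comm_ring_1 mat"
  assumes Y: "Y \<in> carrier_mat n n" and j: "j < n"
  shows "det (replace_col Y j w) = (\<Sum>i<n. w i * cofactor Y i j)"
proof -
  have "det (replace_col Y j w) = (\<Sum>i<n. replace_col Y j w $$ (i,j) * cofactor (replace_col Y j w) i j)"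
    by (rule laplace_expansion_column[OF replace_col_carrier[OF Y] j])
  also have "\<dots> = (\<Sum>i<n. w i * cofactor Y i j)"
  proof (intro sum.cong refl)
    fix i assume "i \<in> {..<n}"
    then have "replace_col Y j w $$ (i,j) = w i" using Y j unfolding replace_col_def by auto
    moreover have "cofactor (replace_col Y j w) i j = cofactor Y i j"
      unfolding cofactor_def mat_delete_replace_col[OF Y j] ..
    ultimately show "replace_col Y j w $$ (i,j) * cofactor (replace_col Y j w) i j = w i * cofactor Y i j"
      by simp
  qed
  finally show ?thesis .
qed

lemma of_int_of_bit: "of_int (of_bit b :: int) = (b::bit)"
  by (cases b) simp_all

lemma of_int_bit_eq_1_iff: "(of_int k :: bit) = 1 \<longleftrightarrow> odd k"
proof -
  obtain q r where k: "k = 2 * q + r" and r: "r = k mod 2" by (metis div_mult_mod_eq mult.commute)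
  have "(of_int k :: bit) = of_int r" unfolding k by simp
  moreover have "r = 0 \<or> r = 1" using r by auto
  moreover have "even k \<longleftrightarrow> r = 0" using r by (simp add: even_iff_mod_2_eq_zero)
  ultimately show ?thesis by auto
qed

text \<open>Adding an even multiple of \<open>v\<close> to column \<open>j\<close> of \<open>Y\<close> preserves the reduction mod 2 and, with
  \<open>det Y = g * q\<close> for \<open>q\<close> odd, can turn the determinant into \<open>g\<close>.\<close>
lemma odd_det_descent:
  fixes Y :: "int mat"
  assumes Y: "Y \<in> carrier_mat n n" and odd: "odd (det Y)" and not_unit: "\<bar>det Y\<bar> \<noteq> 1"
  obtains Y' where "Y' \<in> carrier_mat n n" "odd (det Y')" "\<bar>det Y'\<bar> < \<bar>det Y\<bar>"
    "map_mat (of_int :: int \<Rightarrow> bit) Y' = map_mat of_int Y"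
proof -
  have nz: "det Y \<noteq> 0" using odd by auto
  obtain j v where j: "j < n" and dvd: "(\<Sum>k<n. v k * cofactor Y k j) dvd det Y"
    and smaller: "\<bar>\<Sum>k<n. v k * cofactor Y k j\<bar> < \<bar>det Y\<bar>"
    by (rule smaller_cofactor_combination[OF Y nz not_unit])
  define g where "g = (\<Sum>k<n. v k * cofactor Y k j)"
  obtain q where q: "det Y = g * q" using dvd unfolding g_def by blast
  define c where "c = (1 - q) div 2"
  have qc: "q + 2 * c = 1" unfolding c_def using odd q by (simp add: odd_two_times_div_two_succ)
  define Y' where "Y' = replace_col Y j (\<lambda>i. Y $$ (i,j) + 2 * (c * v i))"
  have "det Y' = (\<Sum>i<n. Y $$ (i,j) * cofactor Y i j) + 2 * c * g"
    unfolding Y'_def det_replace_col[OF Y j] g_def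
    by (simp add: distrib_right sum.distrib sum_distrib_left mult.assoc)
  also have "(\<Sum>i<n. Y $$ (i,j) * cofactor Y i j) = det Y"
    by (rule laplace_expansion_column[OF Y j, symmetric])
  finally have "det Y' = g * (q + 2 * c)"
    using q by (simp add: algebra_simps)
  then have det_Y': "det Y' = g" using qc by simp
  show ?thesis
  proof (rule that)
    show "Y' \<in> carrier_mat n n" unfolding Y'_def by (rule replace_col_carrier[OF Y])
    show "odd (det Y')" using odd q det_Y' by simp
    show "\<bar>det Y'\<bar> < \<bar>det Y\<bar>" using smaller det_Y' unfolding g_def by simp
    show "map_mat (of_int :: int \<Rightarrow> bit) Y' = map_mat of_int Y"
      using Y unfolding Y'_def replace_col_def by (intro eq_matI) auto
  qed
qed

lemma odd_det_lift_unimodular: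
  fixes Y :: "int mat"
  assumes "Y \<in> carrier_mat n n" and "odd (det Y)"
  shows "\<exists>U. U \<in> carrier_mat n n \<and> \<bar>det U\<bar> = 1 \<and> map_mat (of_int :: int \<Rightarrow> bit) U = map_mat of_int Y"
  using assms
proof (induction "nat \<bar>det Y\<bar>" arbitrary: Y rule: less_induct)
  case less
  show ?case
  proof (cases "\<bar>det Y\<bar> = 1")
    case True
    then show ?thesis using less.prems by blast
  next
    case False
    then obtain Y' where "Y' \<in> carrier_mat n n" "odd (det Y')" "\<bar>det Y'\<bar> < \<bar>det Y\<bar>"
      "map_mat (of_int :: int \<Rightarrow> bit) Y' = map_mat of_int Y"
      using odd_det_descent less.prems by blast
    moreover from this have "nat \<bar>det Y'\<bar> < nat \<bar>det Y\<bar>" by simp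
    ultimately show ?thesis
      using less.hyps[of Y'] by metis
  qed
qed

lemma unimodular_lift:
  fixes X :: "bit mat"
  assumes X: "X \<in> carrier_mat n n" and det: "det X = 1"
  shows "\<exists>U. U \<in> carrier_mat n n \<and> \<bar>det U\<bar> = 1 \<and> map_mat of_int U = X"
proof -
  define Y :: "int mat" where "Y = map_mat of_bit X"
  have Y: "Y \<in> carrier_mat n n" using X unfolding Y_def by auto
  have Y_mod2: "map_mat of_int Y = X"
    using X unfolding Y_def by (intro eq_matI) (auto simp: of_int_of_bit)
  have "of_int (det Y) = (1::bit)"
    using of_int_hom.hom_det[of Y] Y_mod2 det by metis
  then have "odd (det Y)" unfolding of_int_bit_eq_1_iff .
  then show ?thesis using odd_det_lift_unimodular[OF Y] Y_mod2 by simp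
qed

section \<open>Lifting real characteristic matrices\<close>

text \<open>The first \<open>n\<close> vertices span a facet, so \<open>X\<close> can be taken to be the first \<open>n\<close> columns of \<open>L\<close>.\<close>
lemma real_char_matrix_normal_form:
  assumes mono: "strict_mono_on {..<m} t" and "n \<le> m" and L: "real_char_matrix n m t L"
  obtains X N where "X \<in> carrier_mat n n" "det X = 1" "N \<in> carrier_mat n m" "X * N = L"
    "\<forall>i<n. \<forall>k<n. N $$ (i,k) = (if i = k then 1 else 0)"
    "\<forall>S. cyclic_facet n m t S \<longrightarrow> det (col_submat N S) = 1"
proof -
  have Lc: "L \<in> carrier_mat n m" and facL: "\<forall>S. cyclic_facet n m t S \<longrightarrow> det (col_submat L S) = 1"
    using L unfolding real_char_matrix_def by auto
  define X where "X = col_submat L {..<n}"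
  have X: "X \<in> carrier_mat n n" unfolding X_def using col_submat_carrier[of L "{..<n}"] Lc by simp
  have dX: "det X = 1" unfolding X_def using facL cyclic_facet_initial[OF mono \<open>n \<le> m\<close>] by blast
  define A where "A = adj_mat X"
  have A: "A \<in> carrier_mat n n" unfolding A_def by (rule adj_mat(1)[OF X])
  have XA: "X * A = 1\<^sub>m n" unfolding A_def using adj_mat(2)[OF X] dX by (auto intro!: eq_matI)
  have AX: "A * X = 1\<^sub>m n" unfolding A_def using adj_mat(3)[OF X] dX by (auto intro!: eq_matI)
  have "det X * det A = 1" using det_mult[OF X A] XA by simp
  then have dA: "det A = 1" using dX by simp
  define N where "N = A * L"
  have N: "N \<in> carrier_mat n m" unfolding N_def using A Lc by simp
  have "X * N = (X * A) * L" unfolding N_def by (rule assoc_mult_mat[symmetric, OF X A Lc])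
  then have "X * N = L" using XA Lc by simp
  moreover have "N $$ (i,k) = (if i = k then 1 else 0)" if "i < n" "k < n" for i k
  proof -
    have "col_submat N {..<n} = A * X" unfolding N_def X_def
      by (rule col_submat_mult[OF A Lc]) (use \<open>n \<le> m\<close> in auto)
    then show ?thesis using AX index_col_submat_initial[of i N k n] that N by simp
  qed
  moreover have "det (col_submat N S) = 1" if S: "cyclic_facet n m t S" for S
  proof -
    have "S \<subseteq> {..<m}" "card S = n" using S unfolding cyclic_facet_def by auto
    then have "det (col_submat N S) = det A * det (col_submat L S)"
      unfolding N_def col_submat_mult[OF A Lc \<open>S \<subseteq> {..<m}\<close>]
      using det_mult[OF A] col_submat_carrier[of L S] Lc by simp
    then show ?thesis using dA facL S by simp
  qed
  ultimately show ?thesis using that X dX N by blast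
qed

text \<open>In a minor of a \<open>0/1\<close> matrix \<open>[I\<^sub>n | *]\<close> only the columns taken from the last \<open>m - n\<close> ones
  can have two nonzero entries.\<close>
lemma abs_det_col_submat_01_le_2:
  fixes M :: "int mat"
  assumes M: "M \<in> carrier_mat n m" and entries: "\<forall>i<n. \<forall>k<m. M $$ (i,k) \<in> {0,1}"
    and unit: "\<forall>i<n. \<forall>k<n. M $$ (i,k) = (if i = k then 1 else 0)"
    and small: "n \<le> 3 \<or> m \<le> n + 3" and S: "S \<subseteq> {..<m}" "card S = n"
  shows "\<bar>det (col_submat M S)\<bar> \<le> 2"
proof -
  define MS where "MS = col_submat M S"
  have MS: "MS \<in> carrier_mat n n" unfolding MS_def using col_submat_carrier[of M S] M S by simp
  define s where "s k = sorted_list_of_set S ! k" for k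
  have s: "s k \<in> S" if "k < n" for k
    using sorted_list_of_set_nth_mem[OF finite_subset[OF S(1)]] that S unfolding s_def by simp
  have MS_s: "MS $$ (i,k) = M $$ (i, s k)" if "i < n" "k < n" for i k
    unfolding MS_def s_def using index_col_submat[of i M k S] that M S by simp
  have "\<forall>i<n. \<forall>k<n. MS $$ (i,k) \<in> {0,1}"
  proof (intro allI impI)
    fix i k assume "i < n" "k < n"
    moreover from \<open>k < n\<close> have "s k < m" using s S(1) by blast
    ultimately show "MS $$ (i,k) \<in> {0,1}" using MS_s entries by simp
  qed
  moreover have dense_cols: "{k. k < n \<and> \<not> sparse_col MS n k} \<subseteq> {k. k < n \<and> n \<le> s k}"
  proof clarify
    fix k assume k: "k < n" and dense: "\<not> sparse_col MS n k"
    show "n \<le> s k"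
    proof (rule ccontr)
      assume "\<not> n \<le> s k"
      then have "\<forall>i<n. MS $$ (i,k) = (if i = s k then 1 else 0)" using MS_s k unit by simp
      then show False using dense unfolding sparse_col_def by (auto split: if_splits)
    qed
  qed
  moreover have "card {k. k < n \<and> n \<le> s k} \<le> 3"
  proof (cases "n \<le> 3")
    case True
    have "card {k. k < n \<and> n \<le> s k} \<le> card {..<n}" by (rule card_mono) auto
    then show ?thesis using True by simp
  next
    case False
    have "distinct (sorted_list_of_set S)" by simp
    then have "inj_on s {k. k < n \<and> n \<le> s k}"
      unfolding inj_on_def s_def using S(2) by (auto simp: nth_eq_iff_index_eq)
    moreover have "s ` {k. k < n \<and> n \<le> s k} \<subseteq> {n..<m}" using s S(1) by fastforce
    ultimately have "card {k. k < n \<and> n \<le> s k} \<le> card {n..<m}"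
      by (rule card_inj_on_le) simp
    then show ?thesis using False small by simp
  qed
  moreover have "card {k. k < n \<and> \<not> sparse_col MS n k} \<le> card {k. k < n \<and> n \<le> s k}"
    by (rule card_mono[OF _ dense_cols]) simp
  ultimately have "card {k. k < n \<and> \<not> sparse_col MS n k} \<le> 3" by linarith
  then show ?thesis
    using abs_det_01_le_2[OF MS] \<open>\<forall>i<n. \<forall>k<n. MS $$ (i,k) \<in> {0,1}\<close> unfolding MS_def by blast
qed

text \<open>Every facet minor of the \<open>0/1\<close> lift is odd and at most \<open>2\<close> in absolute value.\<close>
lemma char_matrix_of_bit_lift:
  fixes N :: "bit mat" and U :: "int mat"
  assumes "n \<le> m" and small: "n \<le> 3 \<or> m \<le> n + 3" and N: "N \<in> carrier_mat n m"
    and unit: "\<forall>i<n. \<forall>k<n. N $$ (i,k) = (if i = k then 1 else 0)"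
    and facets: "\<forall>S. cyclic_facet n m t S \<longrightarrow> det (col_submat N S) = 1"
    and U: "U \<in> carrier_mat n n" and det_U: "\<bar>det U\<bar> = 1"
  shows "char_matrix n m t (U * map_mat of_bit N)"
proof -
  define M :: "int mat" where "M = map_mat of_bit N"
  have M: "M \<in> carrier_mat n m" using N unfolding M_def by simp
  have M_01: "\<forall>i<n. \<forall>k<m. M $$ (i,k) \<in> {0,1}"
    using N unfolding M_def by (auto simp: of_bool_def)
  have M_unit: "\<forall>i<n. \<forall>k<n. M $$ (i,k) = (if i = k then 1 else 0)"
    using N unit \<open>n \<le> m\<close> unfolding M_def by simp
  have M_mod2: "map_mat of_int M = N"
    using N unfolding M_def by (intro eq_matI) (auto simp: of_int_of_bit)
  have "det (col_submat (U * M) S) \<in> {1, -1}" if S: "cyclic_facet n m t S" for S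
  proof -
    have Ssub: "S \<subseteq> {..<m}" and card: "card S = n" using S unfolding cyclic_facet_def by auto
    define MS where "MS = col_submat M S"
    have MS: "MS \<in> carrier_mat n n" unfolding MS_def using col_submat_carrier[of M S] M card by simp
    have det_UM: "det (col_submat (U * M) S) = det U * det MS"
      unfolding MS_def col_submat_mult[OF U M Ssub] using det_mult[OF U] MS unfolding MS_def by simp
    have "map_mat (of_int :: int \<Rightarrow> bit) MS = col_submat N S"
      unfolding MS_def using col_submat_map[of S M "of_int :: int \<Rightarrow> bit"] Ssub M M_mod2 by simp
    then have "(of_int (det MS) :: bit) = det (col_submat N S)"
      by (metis of_int_hom.hom_det)
    then have "(of_int (det MS) :: bit) = 1" using facets S by simp
    then have "odd (det MS)" unfolding of_int_bit_eq_1_iff .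
    moreover have "\<bar>det MS\<bar> \<le> 2"
      unfolding MS_def by (rule abs_det_col_submat_01_le_2[OF M M_01 M_unit small Ssub card])
    ultimately have "det MS \<in> {1, -1}"
      by (cases "det MS = 0 \<or> det MS = 2 \<or> det MS = -2") auto
    moreover have "det U \<in> {1, -1}" using det_U by auto
    ultimately show ?thesis unfolding det_UM by auto
  qed
  then show ?thesis unfolding char_matrix_def M_def[symmetric] using U M by auto
qed

theorem corollary1p6:
  fixes n m :: nat and t :: "nat \<Rightarrow> real" and L :: "bit mat"
  assumes "2 \<le> n" and "n < m"
    and "strict_mono_on {..<m} t"
    and "real_char_matrix n m t L"
  shows "\<exists>L' :: int mat. char_matrix n m t L' \<and> mod2_reduction L' = L"
proof -
  obtain X N where X: "X \<in> carrier_mat n n" "det X = 1" and N: "N \<in> carrier_mat n m" "X * N = L"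
    and unit: "\<forall>i<n. \<forall>k<n. N $$ (i,k) = (if i = k then 1 else 0)"
    and facets: "\<forall>S. cyclic_facet n m t S \<longrightarrow> det (col_submat N S) = 1"
    using real_char_matrix_normal_form[OF assms(3) less_imp_le[OF assms(2)] assms(4)] by blast
  have "\<not> (4 \<le> n \<and> n + 4 \<le> m)"
    using no_normal_real_char_matrix_if_large[OF assms(3) _ _ N(1) unit facets] by blast
  then have small: "n \<le> 3 \<or> m \<le> n + 3" by linarith
  obtain U where U: "U \<in> carrier_mat n n" "\<bar>det U\<bar> = 1" "map_mat of_int U = X"
    using unimodular_lift[OF X] by blast
  have "char_matrix n m t (U * map_mat of_bit N)"
    by (rule char_matrix_of_bit_lift[OF less_imp_le[OF assms(2)] small N(1) unit facets U(1,2)])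
  moreover have "mod2_reduction (U * map_mat of_bit N) = L"
  proof -
    have "mod2_reduction (U * map_mat of_bit N) = map_mat of_int U * map_mat of_int (map_mat of_bit N)"
      unfolding mod2_reduction_def by (rule of_int_hom.mat_hom_mult[OF U(1)]) (use N in simp)
    also have "map_mat of_int (map_mat of_bit N) = N"
      using N by (intro eq_matI) (auto simp: of_int_of_bit)
    finally show ?thesis using U(3) N(2) by simp
  qed
  ultimately show ?thesis by blast
qed

end
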